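(* Consider either the IV model given by exclusion, random assignment and consistency, or the IV model given by exclusion, joint independence and outcome consistency. Let $F\subset\mathbb R^{2\ell n}$ be a finite set such that $L(\mathcal P)=\max_{\mathbf f\in F}\mathbf f^\top\mathbf p$ for every observed law $\mathcal P$ compatible with the model (or such that $U(\mathcal P)=\min_{\mathbf f\in F}\mathbf f^\top\mathbf p$ for every compatible $\mathcal P$). Then $|F|\ge \ell\big((\ell-1)^{n-1}-(\ell-1)\big)$.
   Context: $D\in\{0,1\}$ treatment; $Y$ outcome with values $\gamma_0<\dots<\gamma_{n-1}$; instrument $Z$ with values in $[\ell]=\{0,\dots,\ell-1\}$; $[n]=\{0,\dots,n-1\}$. Potential outcomes $Y^{(d,z)}$, potential treatments $D^{(z)}$. Exclusion: $Y^{(d,z)}=Y^{(d,z')}$ a.s. for all $z,z',d$ (written $Y^{(d)}$). Random assignment: $Z\perp(Y^{(0)},Y^{(1)},D^{(0)},\dots,D^{(\ell-1)})$. Joint independence: $Z\perp(Y^{(0)},Y^{(1)})$. Consistency: $Y=(1-D)Y^{(0)}+DY^{(1)}$ and $D=\sum_z\mathbb 1(Z=z)D^{(z)}$; outcome consistency is only the first of these. An observed law $\mathcal P$ of $(Y,D,Z)$ (with $\mathcal P(Z=z)>0$ for all $z$) is compatible with a model if it is induced by a joint law of potential outcomes (and potential treatments, resp. $D$) and $Z$ satisfying the model's assumptions. $\mathbf p\in\mathbb R^{2\ell n}$ has entries $p_{yd,z}=\mathcal P(Y=\gamma_y,D=d\mid Z=z)$ and $\mathbf f^\top\mathbf p=\sum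 f_{yd,z}p_{yd,z}$. $L(\mathcal P)$, $U(\mathcal P)$ are the infimum and supremum of $\mathbb E[Y^{(1)}-Y^{(0)}]$ over laws satisfying the model that induce $\mathcal P$. *)

theory Defs
  imports "HOL-Probability.Probability"
begin

text \<open>Outcome values are gamma 0 < ... < gamma (n-1); treatment D in {0,1} (as nat);
  instrument Z in {0..<l}.
  Potential outcomes Y^(d,z) are stored as Yp d z (for d < 2, z < l);
  potential treatments D^(z) as Dp z.  Under exclusion Y^(d) is Yp d 0.\<close>

type_synonym obs = "real \<times> nat \<times> nat"

type_synonym world_ra = "obs \<times> (nat \<Rightarrow> nat \<Rightarrow> real) \<times> (nat \<Rightarrow> nat)"

type_synonym world_ji = "obs \<times> (nat \<Rightarrow> nat \<Rightarrow> real)"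

datatype iv_model = RandomAssignment | JointIndependence

text \<open>Independence of two discrete random variables on a pmf (elementary definition;
  for discrete random variables this is ordinary stochastic independence).\<close>
definition indep_discrete :: "'w pmf \<Rightarrow> ('w \<Rightarrow> 'a) \<Rightarrow> ('w \<Rightarrow> 'b) \<Rightarrow> bool" where
  "indep_discrete \<omega> X W \<longleftrightarrow>
     (\<forall>a b. measure_pmf.prob \<omega> {w. X w = a \<and> W w = b}
            = measure_pmf.prob \<omega> {w. X w = a} * measure_pmf.prob \<omega> {w. W w = b})"

definition obsZ :: "obs \<Rightarrow> nat" where
  "obsZ o' = snd (snd o')"

definition ra_law :: "(nat \<Rightarrow> real) \<Rightarrow> nat \<Rightarrow> nat \<Rightarrow> world_ra pmf \<Rightarrow> bool" where
  "ra_law \<gamma> n l \<omega> \<longleftrightarrow>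
     (\<forall>w\<in>set_pmf \<omega>. case w of ((Y, D, Z), Yp, Dp) \<Rightarrow>
        Z < l
      \<and> (\<forall>d<2. \<forall>z<l. Yp d z \<in> \<gamma> ` {..<n})
      \<and> (\<forall>z<l. Dp z \<in> {0, 1})
      \<and> (\<forall>d<2. \<forall>z<l. \<forall>z'<l. Yp d z = Yp d z')
      \<and> Y = (1 - real D) * Yp 0 0 + real D * Yp 1 0
      \<and> D = (\<Sum>z<l. (if Z = z then 1 else 0) * Dp z))
   \<and> indep_discrete \<omega> (\<lambda>w. obsZ (fst w))
       (\<lambda>w. (fst (snd w) 0 0, fst (snd w) 1 0, map (snd (snd w)) [0..<l]))"

definition ji_law :: "(nat \<Rightarrow> real) \<Rightarrow> nat \<Rightarrow> nat \<Rightarrow> world_ji pmf \<Rightarrow> bool" where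
  "ji_law \<gamma> n l \<omega> \<longleftrightarrow>
     (\<forall>w\<in>set_pmf \<omega>. case w of ((Y, D, Z), Yp) \<Rightarrow>
        Z < l
      \<and> D \<in> {0, 1}
      \<and> (\<forall>d<2. \<forall>z<l. Yp d z \<in> \<gamma> ` {..<n})
      \<and> (\<forall>d<2. \<forall>z<l. \<forall>z'<l. Yp d z = Yp d z')
      \<and> Y = (1 - real D) * Yp 0 0 + real D * Yp 1 0)
   \<and> indep_discrete \<omega> (\<lambda>w. obsZ (fst w))
       (\<lambda>w. (snd w 0 0, snd w 1 0))"

definition ate_set :: "iv_model \<Rightarrow> (nat \<Rightarrow> real) \<Rightarrow> nat \<Rightarrow> nat \<Rightarrow> obs pmf \<Rightarrow> real set" where
  "ate_set m \<gamma> n l P =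
     (case m of
        RandomAssignment \<Rightarrow>
          {measure_pmf.expectation \<omega> (\<lambda>w. fst (snd w) 1 0 - fst (snd w) 0 0) | \<omega>.
             ra_law \<gamma> n l \<omega> \<and> map_pmf fst \<omega> = P}
      | JointIndependence \<Rightarrow>
          {measure_pmf.expectation \<omega> (\<lambda>w. snd w 1 0 - snd w 0 0) | \<omega>.
             ji_law \<gamma> n l \<omega> \<and> map_pmf fst \<omega> = P})"

definition compatible :: "iv_model \<Rightarrow> (nat \<Rightarrow> real) \<Rightarrow> nat \<Rightarrow> nat \<Rightarrow> obs pmf \<Rightarrow> bool" where
  "compatible m \<gamma> n l P \<longleftrightarrow>
     (\<forall>z<l. measure_pmf.prob P {o'. obsZ o' = z} > 0) \<and> ate_set m \<gamma> n l P \<noteq> {}"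

definition lower_bound :: "iv_model \<Rightarrow> (nat \<Rightarrow> real) \<Rightarrow> nat \<Rightarrow> nat \<Rightarrow> obs pmf \<Rightarrow> real" where
  "lower_bound m \<gamma> n l P = Inf (ate_set m \<gamma> n l P)"

definition upper_bound :: "iv_model \<Rightarrow> (nat \<Rightarrow> real) \<Rightarrow> nat \<Rightarrow> nat \<Rightarrow> obs pmf \<Rightarrow> real" where
  "upper_bound m \<gamma> n l P = Sup (ate_set m \<gamma> n l P)"

text \<open>Coordinates (y, d, z) of R^(2 l n).\<close>
definition coords :: "nat \<Rightarrow> nat \<Rightarrow> (nat \<times> nat \<times> nat) set" where
  "coords n l = {..<n} \<times> {..<2} \<times> {..<l}"

definition coord_space :: "nat \<Rightarrow> nat \<Rightarrow> (nat \<times> nat \<times> nat \<Rightarrow> real) set" where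
  "coord_space n l = {f. \<forall>k. k \<notin> coords n l \<longrightarrow> f k = 0}"

definition pvec :: "(nat \<Rightarrow> real) \<Rightarrow> obs pmf \<Rightarrow> nat \<times> nat \<times> nat \<Rightarrow> real" where
  "pvec \<gamma> P k = (case k of (y, d, z) \<Rightarrow>
      measure_pmf.prob P {(\<gamma> y, d, z)} / measure_pmf.prob P {o'. obsZ o' = z})"

definition fdot :: "(nat \<Rightarrow> real) \<Rightarrow> nat \<Rightarrow> nat \<Rightarrow> (nat \<times> nat \<times> nat \<Rightarrow> real) \<Rightarrow> obs pmf \<Rightarrow> real" where
  "fdot \<gamma> n l f P = (\<Sum>k\<in>coords n l. f k * pvec \<gamma> P k)"

end

(* For each label (z0, c), with z0 < l and c a map from {1, ..., n-1} to [l] - {z0}, a uniform mixture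
   of n response types gives a compatible observed law P_(z0,c) at which L equals the ATE v_(z0,c) of the
   mixture: a dual-feasible coefficient vector, valid for every law of the model by weak duality, is
   tight there.  Choose for each label some f in F attaining the maximum at P_(z0,c).  If the same f
   served two labels i and j, its value at the midpoint law (P_i + P_j)/2, which is linear in the law,
   would be at least (v_i + v_j)/2; but exchanging two response types with the same observable responses
   realises that midpoint law with a strictly smaller ATE.  Hence |F| >= l (l-1)^(n-1), which exceeds
   the claimed bound.  The upper-bound case reduces to the lower one, because relabelling the treatment
   d as 1 - d maps each model to itself and negates the ATE. *)

theory Submission
  imports Defs
begin

lemma measure_pmf_prob_cong:
  assumes "\<And>w. w \<in> set_pmf \<omega> \<Longrightarrow> w \<in> A \<longleftrightarrow> w \<in> B"
  shows "measure_pmf.prob \<omega> A = measure_pmf.prob \<omega> B"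
  by (metis assms measure_Int_set_pmf Int_iff subsetI subset_antisym)

lemma measure_pmf_prob_finite_range_split:
  assumes "finite C" and "\<And>w. w \<in> set_pmf \<omega> \<Longrightarrow> V w \<in> C"
  shows "measure_pmf.prob \<omega> {w. E w \<and> \<psi> (V w) = b}
       = (\<Sum>c\<in>{c\<in>C. \<psi> c = b}. measure_pmf.prob \<omega> {w. E w \<and> V w = c})"
proof -
  have "measure_pmf.prob \<omega> {w. E w \<and> \<psi> (V w) = b}
      = measure_pmf.prob \<omega> (\<Union>c\<in>{c\<in>C. \<psi> c = b}. {w. E w \<and> V w = c})"
    using assms(2) by (intro measure_pmf_prob_cong) auto
  also have "\<dots> = (\<Sum>c\<in>{c\<in>C. \<psi> c = b}. measure_pmf.prob \<omega> {w. E w \<and> V w = c})"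
    using assms(1) by (intro measure_pmf.finite_measure_finite_Union) (auto simp: disjoint_family_on_def)
  finally show ?thesis .
qed

lemma indep_discrete_map_pmf:
  "indep_discrete (map_pmf h \<omega>) X W \<longleftrightarrow> indep_discrete \<omega> (\<lambda>x. X (h x)) (\<lambda>x. W (h x))"
  unfolding indep_discrete_def by (simp add: vimage_def)

lemma indep_discrete_pair_pmf:
  fixes A B :: "nat pmf"
  shows "indep_discrete (pair_pmf A B) (\<lambda>x. g (fst x)) (\<lambda>x. h (snd x))"
  unfolding indep_discrete_def
proof (intro allI)
  fix a b
  have e1: "{x. g (fst x) = a \<and> h (snd x) = b} = {u. g u = a} \<times> {v. h v = b}"
    and e2: "{x. g (fst x) = a} = {u. g u = a} \<times> UNIV" and e3: "{x. h (snd x) = b} = UNIV \<times> {v. h v = b}"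
    by auto
  show "measure_pmf.prob (pair_pmf A B) {x. g (fst x) = a \<and> h (snd x) = b}
      = measure_pmf.prob (pair_pmf A B) {x. g (fst x) = a} * measure_pmf.prob (pair_pmf A B) {x. h (snd x) = b}"
    unfolding e1 e2 e3 by (simp add: measure_pmf_prob_product)
qed

lemma indep_discrete_comp:
  assumes indep: "indep_discrete \<omega> X V" and "finite C" and "\<And>w. w \<in> set_pmf \<omega> \<Longrightarrow> V w \<in> C"
  shows "indep_discrete \<omega> X (\<lambda>w. \<psi> (V w))"
  unfolding indep_discrete_def
proof (intro allI)
  fix a b
  note split = measure_pmf_prob_finite_range_split[OF assms(2,3)]
  have "measure_pmf.prob \<omega> {w. X w = a \<and> \<psi> (V w) = b}
      = (\<Sum>c\<in>{c\<in>C. \<psi> c = b}. measure_pmf.prob \<omega> {w. X w = a \<and> V w = c})"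
    by (rule split)
  also have "\<dots> = (\<Sum>c\<in>{c\<in>C. \<psi> c = b}. measure_pmf.prob \<omega> {w. X w = a} * measure_pmf.prob \<omega> {w. True \<and> V w = c})"
    using indep unfolding indep_discrete_def by simp
  also have "\<dots> = measure_pmf.prob \<omega> {w. X w = a} * measure_pmf.prob \<omega> {w. True \<and> \<psi> (V w) = b}"
    unfolding sum_distrib_left[symmetric] by (rule arg_cong[OF split[symmetric]])
  finally show "measure_pmf.prob \<omega> {w. X w = a \<and> \<psi> (V w) = b}
      = measure_pmf.prob \<omega> {w. X w = a} * measure_pmf.prob \<omega> {w. \<psi> (V w) = b}" by simp
qed

lemma measure_pmf_prob_box:
  fixes \<mu> :: "('a \<times> 'b \<times> 'c \<times> 'd) pmf"
  assumes "set_pmf \<mu> \<subseteq> A" and "finite A1" "finite A2" "finite A3" "finite A4"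
    and "\<And>u. u \<in> A \<Longrightarrow> u \<in> B \<longleftrightarrow> u \<in> A1 \<times> A2 \<times> A3 \<times> A4"
  shows "measure_pmf.prob \<mu> B = (\<Sum>z\<in>A1. \<Sum>a\<in>A2. \<Sum>b\<in>A3. \<Sum>d\<in>A4. pmf \<mu> (z, a, b, d))"
proof -
  have "measure_pmf.prob \<mu> B = measure_pmf.prob \<mu> (A1 \<times> A2 \<times> A3 \<times> A4)"
    using assms(1,6) by (intro measure_pmf_prob_cong) auto
  then show ?thesis
    using assms(2-5) by (simp add: measure_measure_pmf_finite sum.cartesian_product)
qed

lemma sum_indicator_times: "(z::nat) < l \<Longrightarrow> (\<Sum>z'<l. (if z = z' then 1 else 0) * (h z' :: nat)) = h z"
proof -
  assume "z < l"
  have "(\<Sum>z'<l. (if z = z' then 1 else 0) * h z') = (\<Sum>z'<l. if z = z' then h z' else 0)"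
    by (intro sum.cong) auto
  also have "\<dots> = h z" using \<open>z < l\<close> by simp
  finally show ?thesis .
qed

lemma ra_law_support:
  assumes "ra_law \<gamma> n l \<omega>" and "((Y, D, Z), Yp, Dp) \<in> set_pmf \<omega>"
  shows "Z < l" and "\<forall>d<2. \<forall>z<l. Yp d z \<in> \<gamma> ` {..<n}" and "\<forall>z<l. Dp z \<in> {0, 1}"
    and "\<forall>d<2. \<forall>z<l. \<forall>z'<l. Yp d z = Yp d z'" and "Y = (1 - real D) * Yp 0 0 + real D * Yp 1 0"
    and "D = Dp Z"
proof -
  note facts = bspec[OF conjunct1[OF assms(1)[unfolded ra_law_def]] assms(2), unfolded prod.case]
  then show "Z < l" and "\<forall>d<2. \<forall>z<l. Yp d z \<in> \<gamma> ` {..<n}" and "\<forall>z<l. Dp z \<in> {0, 1}"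
    and "\<forall>d<2. \<forall>z<l. \<forall>z'<l. Yp d z = Yp d z'" and "Y = (1 - real D) * Yp 0 0 + real D * Yp 1 0"
    by blast+
  from facts show "D = Dp Z" using sum_indicator_times[of Z l Dp] by argo
qed

lemma ji_law_support:
  assumes "ji_law \<gamma> n l \<omega>" and "((Y, D, Z), Yp) \<in> set_pmf \<omega>"
  shows "Z < l" and "D \<in> {0, 1}" and "\<forall>d<2. \<forall>z<l. Yp d z \<in> \<gamma> ` {..<n}"
    and "\<forall>d<2. \<forall>z<l. \<forall>z'<l. Yp d z = Yp d z'" and "Y = (1 - real D) * Yp 0 0 + real D * Yp 1 0"
  using bspec[OF conjunct1[OF assms(1)[unfolded ji_law_def]] assms(2), unfolded prod.case]
  by blast+

lemma ra_lawI:
  assumes "\<And>Y D Z Yp Dp. ((Y, D, Z), Yp, Dp) \<in> set_pmf \<omega> \<Longrightarrow>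
      Z < l \<and> (\<forall>d<2. \<forall>z<l. Yp d z \<in> \<gamma> ` {..<n}) \<and> (\<forall>z<l. Dp z \<in> {0, 1})
      \<and> (\<forall>d<2. \<forall>z<l. \<forall>z'<l. Yp d z = Yp d z') \<and> Y = (1 - real D) * Yp 0 0 + real D * Yp 1 0
      \<and> D = (\<Sum>z<l. (if Z = z then 1 else 0) * Dp z)"
    and "indep_discrete \<omega> (\<lambda>w. obsZ (fst w))
      (\<lambda>w. (fst (snd w) 0 0, fst (snd w) 1 0, map (snd (snd w)) [0..<l]))"
  shows "ra_law \<gamma> n l \<omega>"
  using assms unfolding ra_law_def Ball_def by (simp only: split_paired_All prod.case) blast

lemma ji_lawI:
  assumes "\<And>Y D Z Yp. ((Y, D, Z), Yp) \<in> set_pmf \<omega> \<Longrightarrow>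
      Z < l \<and> D \<in> {0, 1} \<and> (\<forall>d<2. \<forall>z<l. Yp d z \<in> \<gamma> ` {..<n})
      \<and> (\<forall>d<2. \<forall>z<l. \<forall>z'<l. Yp d z = Yp d z') \<and> Y = (1 - real D) * Yp 0 0 + real D * Yp 1 0"
    and "indep_discrete \<omega> (\<lambda>w. obsZ (fst w)) (\<lambda>w. (snd w 0 0, snd w 1 0))"
  shows "ji_law \<gamma> n l \<omega>"
  using assms unfolding ji_law_def Ball_def by (simp only: split_paired_All prod.case) blast

lemma ate_set_ra_memberI:
  "ra_law \<gamma> n l \<omega> \<Longrightarrow> map_pmf fst \<omega> = P \<Longrightarrow>
   measure_pmf.expectation \<omega> (\<lambda>w. fst (snd w) 1 0 - fst (snd w) 0 0) \<in> ate_set RandomAssignment \<gamma> n l P"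
  unfolding ate_set_def by auto

lemma ate_set_ji_memberI:
  "ji_law \<gamma> n l \<omega> \<Longrightarrow> map_pmf fst \<omega> = P \<Longrightarrow>
   measure_pmf.expectation \<omega> (\<lambda>w. snd w 1 0 - snd w 0 0) \<in> ate_set JointIndependence \<gamma> n l P"
  unfolding ate_set_def by auto

lemma ra_law_indep_comp:
  assumes "ra_law \<gamma> n l \<omega>"
  shows "indep_discrete \<omega> (\<lambda>w. obsZ (fst w))
     (\<lambda>w. \<psi> (fst (snd w) 0 0, fst (snd w) 1 0, map (snd (snd w)) [0..<l]))"
proof (rule indep_discrete_comp[where C="\<gamma> ` {..<n} \<times> \<gamma> ` {..<n} \<times> {ds. set ds \<subseteq> {0, 1} \<and> length ds = l}"])
  show "indep_discrete \<omega> (\<lambda>w. obsZ (fst w))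
      (\<lambda>w. (fst (snd w) 0 0, fst (snd w) 1 0, map (snd (snd w)) [0..<l]))"
    using assms unfolding ra_law_def by (rule conjunct2)
  show "finite (\<gamma> ` {..<n} \<times> \<gamma> ` {..<n} \<times> {ds. set ds \<subseteq> {0, 1} \<and> length ds = l})"
    by (intro finite_cartesian_product finite_imageI finite_lists_length_eq) auto
  fix w assume w: "w \<in> set_pmf \<omega>"
  obtain Y D Z Yp Dp where wd: "w = ((Y, D, Z), Yp, Dp)" by (metis prod.collapse)
  show "(fst (snd w) 0 0, fst (snd w) 1 0, map (snd (snd w)) [0..<l])
      \<in> \<gamma> ` {..<n} \<times> \<gamma> ` {..<n} \<times> {ds. set ds \<subseteq> {0, 1} \<and> length ds = l}"
    using ra_law_support(1-3)[OF assms w[unfolded wd]] unfolding wd by auto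
qed

lemma ji_law_indep_comp:
  assumes "ji_law \<gamma> n l \<omega>"
  shows "indep_discrete \<omega> (\<lambda>w. obsZ (fst w)) (\<lambda>w. \<psi> (snd w 0 0, snd w 1 0))"
proof (rule indep_discrete_comp[where C="\<gamma> ` {..<n} \<times> \<gamma> ` {..<n}"])
  show "indep_discrete \<omega> (\<lambda>w. obsZ (fst w)) (\<lambda>w. (snd w 0 0, snd w 1 0))"
    using assms unfolding ji_law_def by (rule conjunct2)
  show "finite (\<gamma> ` {..<n} \<times> \<gamma> ` {..<n})" by simp
  fix w assume w: "w \<in> set_pmf \<omega>"
  obtain Y D Z Yp where wd: "w = ((Y, D, Z), Yp)" by (metis prod.collapse)
  show "(snd w 0 0, snd w 1 0) \<in> \<gamma> ` {..<n} \<times> \<gamma> ` {..<n}"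
    using ji_law_support(1,3)[OF assms w[unfolded wd]] unfolding wd by auto
qed

definition forget_treatments :: "world_ra \<Rightarrow> world_ji" where
  "forget_treatments w = (fst w, fst (snd w))"

lemma ji_law_forget_treatments:
  assumes ra: "ra_law \<gamma> n l \<omega>"
  shows "ji_law \<gamma> n l (map_pmf forget_treatments \<omega>)"
proof (rule ji_lawI, goal_cases support indep)
  case (support Y D Z Yp)
  then obtain Dp where w: "((Y, D, Z), Yp, Dp) \<in> set_pmf \<omega>"
    by (auto simp: forget_treatments_def)
  note s = ra_law_support[OF ra w]
  have "D \<in> {0, 1}" using s(1,3,6) by simp
  then show ?case by (intro conjI s(1,2,4,5))
next
  case indep
  have "(\<lambda>w. obsZ (fst (forget_treatments w))) = (\<lambda>w. obsZ (fst w))"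
    and "(\<lambda>w. (snd (forget_treatments w) 0 0, snd (forget_treatments w) 1 0))
       = (\<lambda>w. (\<lambda>(u, v, _). (u, v)) (fst (snd w) 0 0, fst (snd w) 1 0, map (snd (snd w)) [0..<l]))"
    by (simp_all add: fun_eq_iff forget_treatments_def)
  with ra_law_indep_comp[OF ra] show ?case
    unfolding indep_discrete_map_pmf by (simp only:)
qed

lemma ate_set_subset_ji: "ate_set m \<gamma> n l P \<subseteq> ate_set JointIndependence \<gamma> n l P"
proof (cases m)
  case RandomAssignment
  show ?thesis
  proof
    fix x assume "x \<in> ate_set m \<gamma> n l P"
    then obtain \<omega> where ra: "ra_law \<gamma> n l \<omega>" and P: "map_pmf fst \<omega> = P"
      and x: "x = measure_pmf.expectation \<omega> (\<lambda>w. fst (snd w) 1 0 - fst (snd w) 0 0)"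
      unfolding ate_set_def RandomAssignment by auto
    have "map_pmf fst (map_pmf forget_treatments \<omega>) = P"
      using P by (simp add: map_pmf_comp forget_treatments_def)
    from ate_set_ji_memberI[OF ji_law_forget_treatments[OF ra] this]
    show "x \<in> ate_set JointIndependence \<gamma> n l P"
      unfolding x by (simp add: forget_treatments_def)
  qed
qed simp

lemma ate_set_treatment_binary:
  assumes "x \<in> ate_set m \<gamma> n l P" and "(Y, D, Z) \<in> set_pmf P"
  shows "D \<le> 1"
proof -
  have "x \<in> ate_set JointIndependence \<gamma> n l P" using ate_set_subset_ji assms(1) by blast
  then obtain \<omega> where ji: "ji_law \<gamma> n l \<omega>" and P: "map_pmf fst \<omega> = P"
    unfolding ate_set_def by auto
  then obtain Yp where "((Y, D, Z), Yp) \<in> set_pmf \<omega>" using assms(2) by auto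
  then show ?thesis using ji_law_support(2)[OF ji] by fastforce
qed

section \<open>Relabelling the treatment\<close>

(* On nat, 1 - d swaps 0 and 1 but sends every d >= 1 to 0: flipping is an involution only where the
   treatment is binary. *)
definition flip_obs :: "obs \<Rightarrow> obs" where
  "flip_obs = (\<lambda>(Y, D, Z). (Y, 1 - D, Z))"

definition flip_world_ra :: "world_ra \<Rightarrow> world_ra" where
  "flip_world_ra = (\<lambda>((Y, D, Z), Yp, Dp). ((Y, 1 - D, Z), (\<lambda>d. Yp (1 - d)), (\<lambda>z. 1 - Dp z)))"

definition flip_world_ji :: "world_ji \<Rightarrow> world_ji" where
  "flip_world_ji = (\<lambda>((Y, D, Z), Yp). ((Y, 1 - D, Z), (\<lambda>d. Yp (1 - d))))"

lemma flip_potential_outcomes: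
  fixes Yp :: "nat \<Rightarrow> nat \<Rightarrow> real"
  assumes "\<forall>d<2. \<forall>z<l. Yp d z \<in> \<gamma> ` {..<n}" and "\<forall>d<2. \<forall>z<l. \<forall>z'<l. Yp d z = Yp d z'"
    and "D \<in> {0, 1}" and "Y = (1 - real D) * Yp 0 0 + real D * Yp 1 0"
  shows "\<forall>d<2. \<forall>z<l. Yp (1 - d) z \<in> \<gamma> ` {..<n}"
    and "\<forall>d<2. \<forall>z<l. \<forall>z'<l. Yp (1 - d) z = Yp (1 - d) z'"
    and "1 - D \<in> {0, 1}"
    and "Y = (1 - real (1 - D)) * Yp (1 - 0) 0 + real (1 - D) * Yp (1 - 1) 0"
proof -
  show "\<forall>d<2. \<forall>z<l. Yp (1 - d) z \<in> \<gamma> ` {..<n}" using assms(1) by simp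
  show "\<forall>d<2. \<forall>z<l. \<forall>z'<l. Yp (1 - d) z = Yp (1 - d) z'"
  proof (intro allI impI)
    fix d z z' :: nat assume "d < 2" "z < l" "z' < l"
    then show "Yp (1 - d) z = Yp (1 - d) z'" using assms(2)[rule_format, of "1 - d" z z'] by simp
  qed
  show "1 - D \<in> {0, 1}" by (simp; linarith)
  show "Y = (1 - real (1 - D)) * Yp (1 - 0) 0 + real (1 - D) * Yp (1 - 1) 0"
    using assms(3,4) by (elim insertE) simp_all
qed

lemma ra_law_flip:
  assumes ra: "ra_law \<gamma> n l \<omega>"
  shows "ra_law \<gamma> n l (map_pmf flip_world_ra \<omega>)"
proof (rule ra_lawI, goal_cases support indep)
  case (support Y D Z Yp Dp)
  then obtain D0 Yp0 Dp0 where w: "((Y, D0, Z), Yp0, Dp0) \<in> set_pmf \<omega>"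
    and eqs: "D = 1 - D0" "Yp = (\<lambda>d. Yp0 (1 - d))" "Dp = (\<lambda>z. 1 - Dp0 z)"
    by (auto simp: flip_world_ra_def)
  note s = ra_law_support[OF ra w]
  have D0: "D0 \<in> {0, 1}" using s(1,3,6) by simp
  note f = flip_potential_outcomes[OF s(2,4) D0 s(5)]
  have "\<forall>z<l. 1 - Dp0 z \<in> {0, 1}" by (intro allI impI) (simp; linarith)
  moreover have "1 - D0 = (\<Sum>z<l. (if Z = z then 1 else 0) * (1 - Dp0 z))"
    unfolding s(6) by (rule sum_indicator_times[OF s(1), symmetric])
  ultimately show ?case unfolding eqs by (intro conjI s(1) f(1,2,4))
next
  case indep
  have "(\<lambda>w. obsZ (fst (flip_world_ra w))) = (\<lambda>w. obsZ (fst w))"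
    and "(\<lambda>w. (fst (snd (flip_world_ra w)) 0 0, fst (snd (flip_world_ra w)) 1 0,
            map (snd (snd (flip_world_ra w))) [0..<l]))
       = (\<lambda>w. (\<lambda>(u, v, ds). (v, u, map (\<lambda>d. 1 - d) ds))
            (fst (snd w) 0 0, fst (snd w) 1 0, map (snd (snd w)) [0..<l]))"
    by (simp_all add: fun_eq_iff flip_world_ra_def obsZ_def case_prod_beta)
  with ra_law_indep_comp[OF ra] show ?case
    unfolding indep_discrete_map_pmf by (simp only:)
qed

lemma ji_law_flip:
  assumes ji: "ji_law \<gamma> n l \<omega>"
  shows "ji_law \<gamma> n l (map_pmf flip_world_ji \<omega>)"
proof (rule ji_lawI, goal_cases support indep)
  case (support Y D Z Yp)
  then obtain D0 Yp0 where w: "((Y, D0, Z), Yp0) \<in> set_pmf \<omega>"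
    and eqs: "D = 1 - D0" "Yp = (\<lambda>d. Yp0 (1 - d))"
    by (auto simp: flip_world_ji_def)
  note s = ji_law_support[OF ji w]
  note f = flip_potential_outcomes[OF s(3,4,2,5)]
  show ?case unfolding eqs by (intro conjI s(1) f)
next
  case indep
  have "(\<lambda>w. obsZ (fst (flip_world_ji w))) = (\<lambda>w. obsZ (fst w))"
    and "(\<lambda>w. (snd (flip_world_ji w) 0 0, snd (flip_world_ji w) 1 0))
       = (\<lambda>w. (\<lambda>(u, v). (v, u)) (snd w 0 0, snd w 1 0))"
    by (simp_all add: fun_eq_iff flip_world_ji_def obsZ_def case_prod_beta)
  with ji_law_indep_comp[OF ji] show ?case
    unfolding indep_discrete_map_pmf by (simp only:)
qed

lemma ate_set_flip_obs:
  assumes "x \<in> ate_set m \<gamma> n l P"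
  shows "- x \<in> ate_set m \<gamma> n l (map_pmf flip_obs P)"
proof (cases m)
  case RandomAssignment
  then obtain \<omega> where ra: "ra_law \<gamma> n l \<omega>" and P: "map_pmf fst \<omega> = P"
    and x: "x = measure_pmf.expectation \<omega> (\<lambda>w. fst (snd w) 1 0 - fst (snd w) 0 0)"
    using assms unfolding ate_set_def by auto
  have obs: "map_pmf fst (map_pmf flip_world_ra \<omega>) = map_pmf flip_obs P"
    unfolding P[symmetric] map_pmf_comp by (simp add: flip_world_ra_def flip_obs_def case_prod_beta)
  have "(\<lambda>w. fst (snd (flip_world_ra w)) 1 0 - fst (snd (flip_world_ra w)) 0 0)
      = (\<lambda>w. - (fst (snd w) 1 0 - fst (snd w) 0 0))"
    by (simp add: fun_eq_iff flip_world_ra_def case_prod_beta)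
  then have "measure_pmf.expectation (map_pmf flip_world_ra \<omega>) (\<lambda>w. fst (snd w) 1 0 - fst (snd w) 0 0) = - x"
    unfolding integral_map_pmf x by (simp only: integral_minus)
  with ate_set_ra_memberI[OF ra_law_flip[OF ra] obs] show ?thesis
    unfolding RandomAssignment by simp
next
  case JointIndependence
  then obtain \<omega> where ji: "ji_law \<gamma> n l \<omega>" and P: "map_pmf fst \<omega> = P"
    and x: "x = measure_pmf.expectation \<omega> (\<lambda>w. snd w 1 0 - snd w 0 0)"
    using assms unfolding ate_set_def by auto
  have obs: "map_pmf fst (map_pmf flip_world_ji \<omega>) = map_pmf flip_obs P"
    unfolding P[symmetric] map_pmf_comp by (simp add: flip_world_ji_def flip_obs_def case_prod_beta)
  have "(\<lambda>w. snd (flip_world_ji w) 1 0 - snd (flip_world_ji w) 0 0) = (\<lambda>w. - (snd w 1 0 - snd w 0 0))"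
    by (simp add: fun_eq_iff flip_world_ji_def case_prod_beta)
  then have "measure_pmf.expectation (map_pmf flip_world_ji \<omega>) (\<lambda>w. snd w 1 0 - snd w 0 0) = - x"
    unfolding integral_map_pmf x by (simp only: integral_minus)
  with ate_set_ji_memberI[OF ji_law_flip[OF ji] obs] show ?thesis
    unfolding JointIndependence by simp
qed

lemma flip_obs_flip_obs:
  assumes "\<And>Y D Z. (Y, D, Z) \<in> set_pmf P \<Longrightarrow> D \<le> 1"
  shows "map_pmf flip_obs (map_pmf flip_obs P) = P"
  unfolding map_pmf_comp using assms by (intro map_pmf_idI) (auto simp: flip_obs_def)

lemma ate_set_flip_obs_eq:
  assumes "ate_set m \<gamma> n l P \<noteq> {}"
  shows "ate_set m \<gamma> n l (map_pmf flip_obs P) = uminus ` ate_set m \<gamma> n l P"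
proof
  show "uminus ` ate_set m \<gamma> n l P \<subseteq> ate_set m \<gamma> n l (map_pmf flip_obs P)"
    using ate_set_flip_obs by blast
  obtain x0 where "x0 \<in> ate_set m \<gamma> n l P" using assms by blast
  then have flip_flip: "map_pmf flip_obs (map_pmf flip_obs P) = P"
    by (intro flip_obs_flip_obs) (rule ate_set_treatment_binary)
  show "ate_set m \<gamma> n l (map_pmf flip_obs P) \<subseteq> uminus ` ate_set m \<gamma> n l P"
  proof
    fix y assume y: "y \<in> ate_set m \<gamma> n l (map_pmf flip_obs P)"
    have "- y \<in> ate_set m \<gamma> n l P" using ate_set_flip_obs[OF y] unfolding flip_flip .
    then show "y \<in> uminus ` ate_set m \<gamma> n l P" by (rule image_eqI[rotated]) simp
  qed
qed

lemma compatible_flip_obs: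
  assumes "compatible m \<gamma> n l P"
  shows "compatible m \<gamma> n l (map_pmf flip_obs P)"
proof -
  have "flip_obs -` {o'. obsZ o' = z} = {o'. obsZ o' = z}" for z
    by (auto simp: flip_obs_def obsZ_def)
  then show ?thesis
    using assms ate_set_flip_obs_eq[of m \<gamma> n l P] unfolding compatible_def by simp
qed

lemma upper_bound_flip_obs:
  assumes "compatible m \<gamma> n l P"
  shows "upper_bound m \<gamma> n l (map_pmf flip_obs P) = - lower_bound m \<gamma> n l P"
  using assms unfolding compatible_def upper_bound_def lower_bound_def Inf_real_def
  by (simp add: ate_set_flip_obs_eq)

definition flip_coord :: "nat \<times> nat \<times> nat \<Rightarrow> nat \<times> nat \<times> nat" where
  "flip_coord = (\<lambda>(y, d, z). (y, 1 - d, z))"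

lemma fdot_flip_obs:
  assumes "\<And>Y D Z. (Y, D, Z) \<in> set_pmf P \<Longrightarrow> D \<le> 1"
  shows "fdot \<gamma> n l f (map_pmf flip_obs P) = fdot \<gamma> n l (f \<circ> flip_coord) P"
proof -
  have "pvec \<gamma> (map_pmf flip_obs P) k = pvec \<gamma> P (flip_coord k)" if kc: "k \<in> coords n l" for k
  proof -
    obtain y d z where k: "k = (y, d, z)" and d: "d < 2" using kc by (auto simp: coords_def)
    have "measure_pmf.prob P (flip_obs -` {(\<gamma> y, d, z)}) = measure_pmf.prob P {(\<gamma> y, 1 - d, z)}"
      using assms d by (intro measure_pmf_prob_cong) (auto simp: flip_obs_def)
    moreover have "flip_obs -` {o'. obsZ o' = z} = {o'. obsZ o' = z}"
      by (auto simp: flip_obs_def obsZ_def)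
    ultimately show ?thesis by (simp add: k pvec_def flip_coord_def)
  qed
  then have "fdot \<gamma> n l f (map_pmf flip_obs P) = (\<Sum>k\<in>coords n l. f k * pvec \<gamma> P (flip_coord k))"
    unfolding fdot_def by simp
  also have "\<dots> = (\<Sum>k\<in>coords n l. f (flip_coord k) * pvec \<gamma> P k)"
  proof (rule sum.reindex_bij_witness[of _ flip_coord flip_coord])
  qed (auto simp: coords_def flip_coord_def)
  finally show ?thesis by (simp add: fdot_def)
qed

lemma lower_bound_max_of_upper_bound_min:
  assumes "finite F" and "F \<noteq> {}"
    and upper: "\<forall>P. compatible m \<gamma> n l P \<longrightarrow> upper_bound m \<gamma> n l P = Min ((\<lambda>f. fdot \<gamma> n l f P) ` F)"
  shows "\<forall>P. compatible m \<gamma> n l P \<longrightarrow>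
     lower_bound m \<gamma> n l P = Max ((\<lambda>f. fdot \<gamma> n l f P) ` (\<lambda>f. - (f \<circ> flip_coord)) ` F)"
proof (intro allI impI)
  fix P assume P: "compatible m \<gamma> n l P"
  then obtain x where "x \<in> ate_set m \<gamma> n l P" unfolding compatible_def by blast
  then have binary: "\<And>Y D Z. (Y, D, Z) \<in> set_pmf P \<Longrightarrow> D \<le> 1" using ate_set_treatment_binary by blast
  have "lower_bound m \<gamma> n l P = - Min ((\<lambda>f. fdot \<gamma> n l f (map_pmf flip_obs P)) ` F)"
    using upper_bound_flip_obs[OF P] upper compatible_flip_obs[OF P] by simp
  also have "\<dots> = Max (uminus ` (\<lambda>f. fdot \<gamma> n l (f \<circ> flip_coord) P) ` F)"
    using assms(1,2) by (simp add: fdot_flip_obs[OF binary])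
  also have "\<dots> = Max ((\<lambda>f. fdot \<gamma> n l f P) ` (\<lambda>f. - (f \<circ> flip_coord)) ` F)"
    by (simp add: image_image fdot_def sum_negf)
  finally show "lower_bound m \<gamma> n l P = Max ((\<lambda>f. fdot \<gamma> n l f P) ` (\<lambda>f. - (f \<circ> flip_coord)) ` F)" .
qed

section \<open>Weak duality\<close>

(* The constraints of the dual of the linear program whose value is L, one for each pair of potential
   outcomes (Y(0), Y(1)) = (gamma a, gamma b). *)
definition dual_feasible :: "(nat \<Rightarrow> real) \<Rightarrow> nat \<Rightarrow> nat \<Rightarrow> (nat \<times> nat \<times> nat \<Rightarrow> real) \<Rightarrow> bool" where
  "dual_feasible \<gamma> n l f \<longleftrightarrow> (\<forall>a<n. \<forall>b<n. (\<Sum>z<l. max (f (b, 1, z)) (f (a, 0, z))) \<le> \<gamma> b - \<gamma> a)"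

lemma dual_feasible_bound:
  fixes q :: "nat \<times> nat \<times> nat \<times> nat \<Rightarrow> real"
  assumes feasible: "dual_feasible \<gamma> n l f" and q: "\<And>u. q u \<ge> 0"
    and \<pi>: "\<And>z. z < l \<Longrightarrow> \<pi> z > 0" and \<rho>: "\<And>a b. \<rho> a b \<ge> 0"
    and split: "\<And>z a b. z < l \<Longrightarrow> a < n \<Longrightarrow> b < n \<Longrightarrow> q (z, a, b, 0) + q (z, a, b, 1) = \<pi> z * \<rho> a b"
  shows "(\<Sum>z<l. (\<Sum>a<n. \<Sum>b<n. f (a, 0, z) * q (z, a, b, 0) + f (b, 1, z) * q (z, a, b, 1)) / \<pi> z)
       \<le> (\<Sum>a<n. \<Sum>b<n. \<rho> a b * (\<gamma> b - \<gamma> a))"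
proof -
  define \<psi> where "\<psi> z a b = max (f (b, 1, z)) (f (a, 0, z))" for z a b
  have "(\<Sum>a<n. \<Sum>b<n. f (a, 0, z) * q (z, a, b, 0) + f (b, 1, z) * q (z, a, b, 1)) / \<pi> z
      \<le> (\<Sum>a<n. \<Sum>b<n. \<psi> z a b * \<rho> a b)" if z: "z < l" for z
  proof -
    have "(\<Sum>a<n. \<Sum>b<n. f (a, 0, z) * q (z, a, b, 0) + f (b, 1, z) * q (z, a, b, 1))
        \<le> (\<Sum>a<n. \<Sum>b<n. \<psi> z a b * (q (z, a, b, 0) + q (z, a, b, 1)))"
      unfolding distrib_left \<psi>_def by (intro sum_mono add_mono mult_right_mono q) auto
    also have "\<dots> = (\<Sum>a<n. \<Sum>b<n. \<pi> z * (\<psi> z a b * \<rho> a b))"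
      using split[OF z] by (intro sum.cong refl) (simp only: lessThan_iff mult_ac)
    also have "\<dots> = \<pi> z * (\<Sum>a<n. \<Sum>b<n. \<psi> z a b * \<rho> a b)"
      by (simp add: sum_distrib_left)
    finally show ?thesis using \<pi>[OF z] by (simp add: divide_le_eq mult.commute)
  qed
  then have "(\<Sum>z<l. (\<Sum>a<n. \<Sum>b<n. f (a, 0, z) * q (z, a, b, 0) + f (b, 1, z) * q (z, a, b, 1)) / \<pi> z)
      \<le> (\<Sum>z<l. \<Sum>a<n. \<Sum>b<n. \<psi> z a b * \<rho> a b)"
    by (intro sum_mono) simp
  also have "\<dots> = (\<Sum>a<n. \<Sum>b<n. \<rho> a b * (\<Sum>z<l. \<psi> z a b))"
    by (subst sum.swap) (simp add: sum.swap[of _ "{..<l}" "{..<n}"] sum_distrib_left mult.commute)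
  also have "\<dots> \<le> (\<Sum>a<n. \<Sum>b<n. \<rho> a b * (\<gamma> b - \<gamma> a))"
    using feasible unfolding dual_feasible_def \<psi>_def by (intro sum_mono mult_left_mono \<rho>) auto
  finally show ?thesis .
qed

(* A law of the joint-independence model is summarised by the joint law of the instrument, the indices
   of Y(0) and Y(1), and the treatment; outcome_obs reads off the observed variables. *)
definition outcome_obs :: "(nat \<Rightarrow> real) \<Rightarrow> nat \<times> nat \<times> nat \<times> nat \<Rightarrow> obs" where
  "outcome_obs \<gamma> = (\<lambda>(z, a, b, d). (\<gamma> (if d = 1 then b else a), d, z))"

lemma sum_lessThan_2: "(\<Sum>d<2. h d) = h 0 + h (1::nat)"
  by (simp add: numeral_2_eq_2)

lemma fdot_outcome_obs:
  fixes \<mu> :: "(nat \<times> nat \<times> nat \<times> nat) pmf"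
  assumes supp: "set_pmf \<mu> \<subseteq> {..<l} \<times> {..<n} \<times> {..<n} \<times> {..<2}" and inj: "inj_on \<gamma> {..<n}"
  shows "fdot \<gamma> n l f (map_pmf (outcome_obs \<gamma>) \<mu>)
    = (\<Sum>z<l. (\<Sum>a<n. \<Sum>b<n. f (a, 0, z) * pmf \<mu> (z, a, b, 0) + f (b, 1, z) * pmf \<mu> (z, a, b, 1))
              / measure_pmf.prob \<mu> {u. fst u = z})"
proof -
  let ?p = "pvec \<gamma> (map_pmf (outcome_obs \<gamma>) \<mu>)" and ?\<pi> = "\<lambda>z. measure_pmf.prob \<mu> {u. fst u = z}"
  have pvec: "?p (y, 0, z) = (\<Sum>b<n. pmf \<mu> (z, y, b, 0)) / ?\<pi> z"
    "?p (y, 1, z) = (\<Sum>a<n. pmf \<mu> (z, a, y, 1)) / ?\<pi> z" if "y < n" for y z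
  proof -
    have "obsZ \<circ> outcome_obs \<gamma> = fst" by (auto simp: obsZ_def outcome_obs_def)
    then have "measure_pmf.prob (map_pmf (outcome_obs \<gamma>) \<mu>) {o'. obsZ o' = z} = ?\<pi> z"
      by (simp add: vimage_def comp_def) (metis fun_eq_iff o_apply)
    moreover have "measure_pmf.prob (map_pmf (outcome_obs \<gamma>) \<mu>) {(\<gamma> y, 0, z)} = (\<Sum>b<n. pmf \<mu> (z, y, b, 0))"
      using that by (subst measure_map_pmf, subst measure_pmf_prob_box[OF supp, of "{z}" "{y}" "{..<n}" "{0}"])
        (auto simp: outcome_obs_def inj_on_eq_iff[OF inj])
    moreover have "measure_pmf.prob (map_pmf (outcome_obs \<gamma>) \<mu>) {(\<gamma> y, 1, z)} = (\<Sum>a<n. pmf \<mu> (z, a, y, 1))"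
      using that by (subst measure_map_pmf, subst measure_pmf_prob_box[OF supp, of "{z}" "{..<n}" "{y}" "{1}"])
        (auto simp: outcome_obs_def inj_on_eq_iff[OF inj])
    ultimately show "?p (y, 0, z) = (\<Sum>b<n. pmf \<mu> (z, y, b, 0)) / ?\<pi> z"
      "?p (y, 1, z) = (\<Sum>a<n. pmf \<mu> (z, a, y, 1)) / ?\<pi> z"
      by (simp_all add: pvec_def)
  qed
  have swap: "(\<Sum>y<n. f (y, 0, z) * (\<Sum>b<n. pmf \<mu> (z, y, b, 0)) + f (y, 1, z) * (\<Sum>a<n. pmf \<mu> (z, a, y, 1)))
      = (\<Sum>a<n. \<Sum>b<n. f (a, 0, z) * pmf \<mu> (z, a, b, 0) + f (b, 1, z) * pmf \<mu> (z, a, b, 1))" for z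
  proof -
    have "(\<Sum>y<n. f (y, 1, z) * (\<Sum>a<n. pmf \<mu> (z, a, y, 1))) = (\<Sum>a<n. \<Sum>b<n. f (b, 1, z) * pmf \<mu> (z, a, b, 1))"
      unfolding sum_distrib_left by (rule sum.swap)
    then show ?thesis by (simp add: sum.distrib sum_distrib_left)
  qed
  have "fdot \<gamma> n l f (map_pmf (outcome_obs \<gamma>) \<mu>) = (\<Sum>y<n. \<Sum>d<2. \<Sum>z<l. f (y, d, z) * ?p (y, d, z))"
    unfolding fdot_def coords_def by (simp add: sum.cartesian_product)
  also have "\<dots> = (\<Sum>y<n. \<Sum>z<l. (f (y, 0, z) * (\<Sum>b<n. pmf \<mu> (z, y, b, 0))
      + f (y, 1, z) * (\<Sum>a<n. pmf \<mu> (z, a, y, 1))) / ?\<pi> z)"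
    unfolding sum_lessThan_2
    by (rule sum.cong[OF refl]) (simp add: pvec[unfolded One_nat_def] sum.distrib[symmetric] add_divide_distrib)
  also have "\<dots> = (\<Sum>z<l. (\<Sum>a<n. \<Sum>b<n. f (a, 0, z) * pmf \<mu> (z, a, b, 0) + f (b, 1, z) * pmf \<mu> (z, a, b, 1))
      / ?\<pi> z)"
    using swap by (subst sum.swap) (simp add: sum_divide_distrib[symmetric] add_divide_distrib[symmetric])
  finally show ?thesis .
qed

lemma pmf_treatment_sum_indep:
  fixes \<mu> :: "(nat \<times> nat \<times> nat \<times> nat) pmf"
  assumes supp: "set_pmf \<mu> \<subseteq> {..<l} \<times> {..<n} \<times> {..<n} \<times> {..<2}"
    and indep: "indep_discrete \<mu> fst (\<lambda>(z, a, b, d). (a, b))"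
  shows "pmf \<mu> (z, a, b, 0) + pmf \<mu> (z, a, b, 1)
    = measure_pmf.prob \<mu> {u. fst u = z} * measure_pmf.prob \<mu> {u. (\<lambda>(z, a, b, d). (a, b)) u = (a, b)}"
proof -
  have "pmf \<mu> (z, a, b, 0) + pmf \<mu> (z, a, b, 1)
      = measure_pmf.prob \<mu> {u. fst u = z \<and> (\<lambda>(z, a, b, d). (a, b)) u = (a, b)}"
    by (subst measure_pmf_prob_box[OF supp, of "{z}" "{a}" "{b}" "{..<2}"]) (auto simp: sum_lessThan_2)
  with indep show ?thesis unfolding indep_discrete_def by simp
qed

lemma expectation_outcome_effect:
  fixes \<mu> :: "(nat \<times> nat \<times> nat \<times> nat) pmf"
  assumes supp: "set_pmf \<mu> \<subseteq> {..<l} \<times> {..<n} \<times> {..<n} \<times> {..<2}"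
  shows "measure_pmf.expectation \<mu> (\<lambda>(z, a, b, d). \<gamma> b - \<gamma> a)
    = (\<Sum>a<n. \<Sum>b<n. measure_pmf.prob \<mu> {u. (\<lambda>(z, a, b, d). (a, b)) u = (a, b)} * (\<gamma> b - \<gamma> a))"
proof -
  have "measure_pmf.expectation \<mu> (\<lambda>(z, a, b, d). \<gamma> b - \<gamma> a)
      = (\<Sum>u\<in>{..<l} \<times> {..<n} \<times> {..<n} \<times> {..<2}. (case u of (z, a, b, d) \<Rightarrow> \<gamma> b - \<gamma> a) * pmf \<mu> u)"
    using supp by (intro integral_measure_pmf_real) auto
  also have "\<dots> = (\<Sum>z<l. \<Sum>a<n. \<Sum>b<n. \<Sum>d<2. (\<gamma> b - \<gamma> a) * pmf \<mu> (z, a, b, d))"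
    by (simp add: sum.cartesian_product split_beta)
  also have "\<dots> = (\<Sum>a<n. \<Sum>b<n. (\<Sum>z<l. \<Sum>d<2. pmf \<mu> (z, a, b, d)) * (\<gamma> b - \<gamma> a))"
    unfolding sum_distrib_right by (subst sum.swap) (subst (2) sum.swap, simp add: mult.commute)
  also have "\<dots> = (\<Sum>a<n. \<Sum>b<n. measure_pmf.prob \<mu> {u. (\<lambda>(z, a, b, d). (a, b)) u = (a, b)} * (\<gamma> b - \<gamma> a))"
  proof (intro sum.cong refl)
    fix a b assume "a \<in> {..<n}" "b \<in> {..<n}"
    then show "(\<Sum>z<l. \<Sum>d<2. pmf \<mu> (z, a, b, d)) * (\<gamma> b - \<gamma> a)
        = measure_pmf.prob \<mu> {u. (\<lambda>(z, a, b, d). (a, b)) u = (a, b)} * (\<gamma> b - \<gamma> a)"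
      by (subst measure_pmf_prob_box[OF supp, of "{..<l}" "{a}" "{b}" "{..<2}"]) auto
  qed
  finally show ?thesis .
qed

lemma fdot_le_expectation_finite:
  fixes \<mu> :: "(nat \<times> nat \<times> nat \<times> nat) pmf"
  assumes supp: "set_pmf \<mu> \<subseteq> {..<l} \<times> {..<n} \<times> {..<n} \<times> {..<2}"
    and inj: "inj_on \<gamma> {..<n}"
    and indep: "indep_discrete \<mu> fst (\<lambda>(z, a, b, d). (a, b))"
    and pos: "\<And>z. z < l \<Longrightarrow> measure_pmf.prob \<mu> {u. fst u = z} > 0"
    and feasible: "dual_feasible \<gamma> n l f"
  shows "fdot \<gamma> n l f (map_pmf (outcome_obs \<gamma>) \<mu>) \<le> measure_pmf.expectation \<mu> (\<lambda>(z, a, b, d). \<gamma> b - \<gamma> a)"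
  unfolding fdot_outcome_obs[OF supp inj] expectation_outcome_effect[OF supp]
  by (rule dual_feasible_bound[OF feasible]) (simp_all add: pos pmf_treatment_sum_indep[OF supp indep, unfolded One_nat_def])

lemma ji_law_finite_reduction:
  assumes ji: "ji_law \<gamma> n l \<omega>" and inj: "inj_on \<gamma> {..<n}"
  obtains \<mu> :: "(nat \<times> nat \<times> nat \<times> nat) pmf"
  where "set_pmf \<mu> \<subseteq> {..<l} \<times> {..<n} \<times> {..<n} \<times> {..<2}"
    and "map_pmf fst \<omega> = map_pmf (outcome_obs \<gamma>) \<mu>"
    and "map_pmf (\<lambda>w. obsZ (fst w)) \<omega> = map_pmf fst \<mu>"
    and "measure_pmf.expectation \<omega> (\<lambda>w. snd w 1 0 - snd w 0 0)
       = measure_pmf.expectation \<mu> (\<lambda>(z, a, b, d). \<gamma> b - \<gamma> a)"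
    and "indep_discrete \<mu> fst (\<lambda>(z, a, b, d). (a, b))"
proof
  define idx where "idx = the_inv_into {..<n} \<gamma>"
  define g where "g w = (obsZ (fst w), idx (snd w 0 0), idx (snd w 1 0), fst (snd (fst w)))" for w :: world_ji
  have g: "g w \<in> {..<l} \<times> {..<n} \<times> {..<n} \<times> {..<2}" "\<gamma> (idx (snd w 0 0)) = snd w 0 0"
    "\<gamma> (idx (snd w 1 0)) = snd w 1 0" "fst w = outcome_obs \<gamma> (g w)"
    if "w \<in> set_pmf \<omega>" for w
  proof -
    obtain Y D Z Yp where w: "w = ((Y, D, Z), Yp)" by (metis prod.collapse)
    note s = ji_law_support[OF ji that[unfolded w]]
    have "Yp 0 0 \<in> \<gamma> ` {..<n}" "Yp 1 0 \<in> \<gamma> ` {..<n}" using s(1,3) by auto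
    then have "\<gamma> (idx (Yp 0 0)) = Yp 0 0" "\<gamma> (idx (Yp 1 0)) = Yp 1 0" "idx (Yp 0 0) < n" "idx (Yp 1 0) < n"
      using inj unfolding idx_def by (auto intro: f_the_inv_into_f the_inv_into_into[of _ _ _ "{..<n}", simplified])
    then show "g w \<in> {..<l} \<times> {..<n} \<times> {..<n} \<times> {..<2}" "\<gamma> (idx (snd w 0 0)) = snd w 0 0"
      "\<gamma> (idx (snd w 1 0)) = snd w 1 0" "fst w = outcome_obs \<gamma> (g w)"
      using s(1,2,5) by (auto simp: w g_def obsZ_def outcome_obs_def)
  qed
  show "set_pmf (map_pmf g \<omega>) \<subseteq> {..<l} \<times> {..<n} \<times> {..<n} \<times> {..<2}"
    using g(1) by (simp only: set_map_pmf image_subset_iff) blast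
  show "map_pmf fst \<omega> = map_pmf (outcome_obs \<gamma>) (map_pmf g \<omega>)"
    unfolding map_pmf_comp using g(4) by (intro map_pmf_cong) auto
  show "map_pmf (\<lambda>w. obsZ (fst w)) \<omega> = map_pmf fst (map_pmf g \<omega>)"
    by (simp add: map_pmf_comp g_def)
  show "measure_pmf.expectation \<omega> (\<lambda>w. snd w 1 0 - snd w 0 0)
      = measure_pmf.expectation (map_pmf g \<omega>) (\<lambda>(z, a, b, d). \<gamma> b - \<gamma> a)"
    unfolding integral_map_pmf using g(2,3)
    by (intro integral_cong_AE) (auto simp: AE_measure_pmf_iff g_def)
  show "indep_discrete (map_pmf g \<omega>) fst (\<lambda>(z, a, b, d). (a, b))"
    using ji_law_indep_comp[OF ji, where \<psi>="\<lambda>(u, v). (idx u, idx v)"]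
    unfolding indep_discrete_map_pmf by (simp add: g_def)
qed

lemma fdot_le_ate:
  assumes "x \<in> ate_set m \<gamma> n l P" and "inj_on \<gamma> {..<n}"
    and "\<forall>z<l. measure_pmf.prob P {o'. obsZ o' = z} > 0" and "dual_feasible \<gamma> n l f"
  shows "fdot \<gamma> n l f P \<le> x"
proof -
  have "x \<in> ate_set JointIndependence \<gamma> n l P" using ate_set_subset_ji assms(1) by blast
  then obtain \<omega> where ji: "ji_law \<gamma> n l \<omega>" and P: "map_pmf fst \<omega> = P"
    and x: "x = measure_pmf.expectation \<omega> (\<lambda>w. snd w 1 0 - snd w 0 0)"
    unfolding ate_set_def by auto
  obtain \<mu> where supp: "set_pmf \<mu> \<subseteq> {..<l} \<times> {..<n} \<times> {..<n} \<times> {..<2}"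
    and obs: "map_pmf fst \<omega> = map_pmf (outcome_obs \<gamma>) \<mu>"
    and instrument: "map_pmf (\<lambda>w. obsZ (fst w)) \<omega> = map_pmf fst \<mu>"
    and ate: "measure_pmf.expectation \<omega> (\<lambda>w. snd w 1 0 - snd w 0 0)
       = measure_pmf.expectation \<mu> (\<lambda>(z, a, b, d). \<gamma> b - \<gamma> a)"
    and indep: "indep_discrete \<mu> fst (\<lambda>(z, a, b, d). (a, b))"
    using ji_law_finite_reduction[OF ji assms(2)] by blast
  have "measure_pmf.prob \<mu> {u. fst u = z} = measure_pmf.prob P {o'. obsZ o' = z}" for z
    using arg_cong[OF instrument, of "\<lambda>p. measure_pmf.prob p {z}"] by (simp add: P[symmetric] vimage_def)
  then have "fdot \<gamma> n l f (map_pmf (outcome_obs \<gamma>) \<mu>) \<le> measure_pmf.expectation \<mu> (\<lambda>(z, a, b, d). \<gamma> b - \<gamma> a)"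
    using assms(3) by (intro fdot_le_expectation_finite[OF supp assms(2) indep _ assms(4)]) auto
  then show ?thesis using P obs ate x by simp
qed

section \<open>Finite mixtures of response types\<close>

type_synonym rtype = "nat \<times> nat \<times> nat set"

definition rtype_treatment :: "rtype \<Rightarrow> nat \<Rightarrow> nat" where
  "rtype_treatment t z = (if z \<in> snd (snd t) then 1 else 0)"

definition rtype_outcome :: "rtype \<Rightarrow> nat \<Rightarrow> nat" where
  "rtype_outcome t z = (if z \<in> snd (snd t) then fst (snd t) else fst t)"

definition rtype_effect :: "(nat \<Rightarrow> real) \<Rightarrow> rtype \<Rightarrow> real" where
  "rtype_effect \<gamma> t = \<gamma> (fst (snd t)) - \<gamma> (fst t)"

definition rtype_score :: "(nat \<times> nat \<times> nat \<Rightarrow> real) \<Rightarrow> nat \<Rightarrow> rtype \<Rightarrow> real" where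
  "rtype_score f l t = (\<Sum>z<l. f (rtype_outcome t z, rtype_treatment t z, z))"

definition rtypes_bounded :: "nat \<Rightarrow> rtype list \<Rightarrow> bool" where
  "rtypes_bounded n ts \<longleftrightarrow> (\<forall>t\<in>set ts. fst t < n \<and> fst (snd t) < n)"

definition mixture_world :: "(nat \<Rightarrow> real) \<Rightarrow> rtype list \<Rightarrow> nat \<times> nat \<Rightarrow> world_ra" where
  "mixture_world \<gamma> ts = (\<lambda>(z, k).
     ((\<gamma> (rtype_outcome (ts ! k) z), rtype_treatment (ts ! k) z, z),
      (\<lambda>d _. if d = 0 then \<gamma> (fst (ts ! k)) else \<gamma> (fst (snd (ts ! k)))),
      rtype_treatment (ts ! k)))"

definition mixture_law :: "(nat \<Rightarrow> real) \<Rightarrow> nat \<Rightarrow> rtype list \<Rightarrow> world_ra pmf" where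
  "mixture_law \<gamma> l ts =
     map_pmf (mixture_world \<gamma> ts) (pair_pmf (pmf_of_set {..<l}) (pmf_of_set {..<length ts}))"

definition mixture_obs :: "(nat \<Rightarrow> real) \<Rightarrow> nat \<Rightarrow> rtype list \<Rightarrow> obs pmf" where
  "mixture_obs \<gamma> l ts = map_pmf fst (mixture_law \<gamma> l ts)"

definition mixture_ate :: "(nat \<Rightarrow> real) \<Rightarrow> rtype list \<Rightarrow> real" where
  "mixture_ate \<gamma> ts = (\<Sum>t\<leftarrow>ts. rtype_effect \<gamma> t) / length ts"

lemma ra_law_mixture_law:
  assumes l: "l > 0" and ts: "ts \<noteq> []" and bounded: "rtypes_bounded n ts"
  shows "ra_law \<gamma> n l (mixture_law \<gamma> l ts)"
proof (rule ra_lawI, goal_cases support indep)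
  case (support Y D Z Yp Dp)
  have "set_pmf (mixture_law \<gamma> l ts) = mixture_world \<gamma> ts ` ({..<l} \<times> {..<length ts})"
    using l ts by (simp add: mixture_law_def set_pmf_of_set lessThan_empty_iff)
  then obtain z k where z: "z < l" and k: "k < length ts"
    and w: "((Y, D, Z), Yp, Dp) = mixture_world \<gamma> ts (z, k)"
    using support by auto
  have "fst (ts ! k) < n" "fst (snd (ts ! k)) < n"
    using bounded k by (auto simp: rtypes_bounded_def)
  then show ?case
    using w z by (auto simp: mixture_world_def rtype_outcome_def rtype_treatment_def sum_indicator_times)
next
  case indep
  show ?case
    unfolding mixture_law_def indep_discrete_map_pmf
    using indep_discrete_pair_pmf[where g="\<lambda>z. z" and A="pmf_of_set {..<l}" and B="pmf_of_set {..<length ts}"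
        and h="\<lambda>k. (\<gamma> (fst (ts ! k)), \<gamma> (fst (snd (ts ! k))), map (rtype_treatment (ts ! k)) [0..<l])"]
    by (simp add: mixture_world_def obsZ_def case_prod_beta)
qed

lemma expectation_mixture_law:
  assumes "ts \<noteq> []"
  shows "measure_pmf.expectation (mixture_law \<gamma> l ts) (\<lambda>w. fst (snd w) 1 0 - fst (snd w) 0 0)
       = mixture_ate \<gamma> ts"
proof -
  have "(\<lambda>x. fst (snd (mixture_world \<gamma> ts x)) 1 0 - fst (snd (mixture_world \<gamma> ts x)) 0 0)
      = (\<lambda>x. rtype_effect \<gamma> (ts ! snd x))"
    by (simp add: fun_eq_iff mixture_world_def rtype_effect_def case_prod_beta)
  have "measure_pmf.expectation (mixture_law \<gamma> l ts) (\<lambda>w. fst (snd w) 1 0 - fst (snd w) 0 0)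
      = measure_pmf.expectation (pmf_of_set {..<length ts}) (\<lambda>k. rtype_effect \<gamma> (ts ! k))"
    unfolding mixture_law_def integral_map_pmf \<open>_ = (\<lambda>x. rtype_effect \<gamma> (ts ! snd x))\<close>
    by (rule expectation_pair_pmf_snd)
  also have "\<dots> = (\<Sum>k<length ts. rtype_effect \<gamma> (ts ! k)) / length ts"
    using assms by (subst integral_pmf_of_set) auto
  finally show ?thesis
    by (simp add: mixture_ate_def sum_list_sum_nth atLeast0LessThan)
qed

lemma ate_set_random_assignment_subset: "ate_set RandomAssignment \<gamma> n l P \<subseteq> ate_set m \<gamma> n l P"
  using ate_set_subset_ji[of RandomAssignment] by (cases m) auto

lemma mixture_ate_in_ate_set:
  assumes "l > 0" and "ts \<noteq> []" and "rtypes_bounded n ts"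
  shows "mixture_ate \<gamma> ts \<in> ate_set m \<gamma> n l (mixture_obs \<gamma> l ts)"
  using ate_set_ra_memberI[OF ra_law_mixture_law[OF assms] mixture_obs_def[symmetric]]
    ate_set_random_assignment_subset
  unfolding expectation_mixture_law[OF assms(2)] by blast

lemma prob_mixture_obs_instrument:
  assumes "l > 0" and "ts \<noteq> []" and "z < l"
  shows "measure_pmf.prob (mixture_obs \<gamma> l ts) {o'. obsZ o' = z} = 1 / l"
proof -
  have "mixture_world \<gamma> ts -` (fst -` {o'. obsZ o' = z}) = {z} \<times> UNIV"
    by (auto simp: mixture_world_def obsZ_def)
  then have "measure_pmf.prob (mixture_obs \<gamma> l ts) {o'. obsZ o' = z}
      = measure_pmf.prob (pair_pmf (pmf_of_set {..<l}) (pmf_of_set {..<length ts})) ({z} \<times> UNIV)"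
    by (simp add: mixture_obs_def mixture_law_def vimage_comp)
  also have "\<dots> = 1 / l"
    using assms by (simp add: measure_pmf_prob_product measure_pmf_single lessThan_empty_iff)
  finally show ?thesis .
qed

lemma compatible_mixture_obs:
  assumes "l > 0" and "ts \<noteq> []" and "rtypes_bounded n ts"
  shows "compatible m \<gamma> n l (mixture_obs \<gamma> l ts)"
  using mixture_ate_in_ate_set[OF assms, where \<gamma>=\<gamma> and m=m]
    prob_mixture_obs_instrument[OF assms(1,2), where \<gamma>=\<gamma>] assms(1)
  unfolding compatible_def by auto

lemma prob_mixture_obs_point:
  assumes "l > 0" and "ts \<noteq> []" and "inj_on \<gamma> {..<n}" and "rtypes_bounded n ts"
    and "z < l" and "y < n"
  shows "measure_pmf.prob (mixture_obs \<gamma> l ts) {(\<gamma> y, d, z)}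
     = (1 / l) * (\<Sum>k<length ts. if rtype_outcome (ts ! k) z = y \<and> rtype_treatment (ts ! k) z = d then 1 else 0)
         / length ts"
proof -
  have outcome: "rtype_outcome (ts ! k) z < n" if "k < length ts" for k
    using assms(4) that by (auto simp: rtypes_bounded_def rtype_outcome_def)
  have "mixture_world \<gamma> ts -` (fst -` {(\<gamma> y, d, z)})
      = {z} \<times> {k. \<gamma> (rtype_outcome (ts ! k) z) = \<gamma> y \<and> rtype_treatment (ts ! k) z = d}"
    by (auto simp: mixture_world_def)
  then have "measure_pmf.prob (mixture_obs \<gamma> l ts) {(\<gamma> y, d, z)}
      = measure_pmf.prob (pair_pmf (pmf_of_set {..<l}) (pmf_of_set {..<length ts}))
          ({z} \<times> {k. \<gamma> (rtype_outcome (ts ! k) z) = \<gamma> y \<and> rtype_treatment (ts ! k) z = d})"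
    by (simp add: mixture_obs_def mixture_law_def vimage_comp)
  also have "\<dots> = (1 / l) * card ({..<length ts} \<inter>
      {k. \<gamma> (rtype_outcome (ts ! k) z) = \<gamma> y \<and> rtype_treatment (ts ! k) z = d}) / length ts"
    using assms by (simp add: measure_pmf_prob_product measure_pmf_single measure_pmf_of_set lessThan_empty_iff)
  also have "{..<length ts} \<inter> {k. \<gamma> (rtype_outcome (ts ! k) z) = \<gamma> y \<and> rtype_treatment (ts ! k) z = d}
      = {k \<in> {..<length ts}. rtype_outcome (ts ! k) z = y \<and> rtype_treatment (ts ! k) z = d}"
    using outcome assms(3,6) by (auto simp: inj_on_eq_iff)
  finally show ?thesis by (simp add: sum.If_cases Int_def)
qed

lemma sum_coords_indicator:
  fixes f :: "nat \<times> nat \<times> nat \<Rightarrow> real"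
  assumes "\<And>z. z < l \<Longrightarrow> u z < n" and "\<And>z. z < l \<Longrightarrow> v z < 2"
  shows "(\<Sum>k\<in>coords n l. f k * (case k of (y, d, z) \<Rightarrow> if u z = y \<and> v z = d then 1 else 0))
       = (\<Sum>z<l. f (u z, v z, z))"
proof -
  have "(\<Sum>k\<in>coords n l. f k * (case k of (y, d, z) \<Rightarrow> if u z = y \<and> v z = d then 1 else 0))
      = (\<Sum>y<n. \<Sum>d<2. \<Sum>z<l. if y = u z \<and> d = v z then f (y, d, z) else 0)"
    unfolding coords_def by (auto simp: sum.cartesian_product intro!: sum.cong)
  also have "\<dots> = (\<Sum>z<l. \<Sum>y<n. \<Sum>d<2. if y = u z \<and> d = v z then f (y, d, z) else 0)"
    by (simp add: sum.swap[of _ "{..<l}"])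
  also have "\<dots> = (\<Sum>z<l. f (u z, v z, z))"
  proof (intro sum.cong refl)
    fix z assume "z \<in> {..<l}"
    then have z: "u z < n" "v z < 2" using assms by auto
    have "(\<Sum>d<2. if y = u z \<and> d = v z then f (y, d, z) else 0) = (if y = u z then f (y, v z, z) else 0)"
      for y using z(2) by (cases "y = u z") simp_all
    then show "(\<Sum>y<n. \<Sum>d<2. if y = u z \<and> d = v z then f (y, d, z) else 0) = f (u z, v z, z)"
      using z(1) by simp
  qed
  finally show ?thesis .
qed

lemma fdot_mixture_obs:
  assumes l: "l > 0" and ts: "ts \<noteq> []" and inj: "inj_on \<gamma> {..<n}" and bounded: "rtypes_bounded n ts"
  shows "fdot \<gamma> n l f (mixture_obs \<gamma> l ts) = (\<Sum>t\<leftarrow>ts. rtype_score f l t) / length ts"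
proof -
  define ind where "ind k x = (case x of (y, d, z) \<Rightarrow>
      if rtype_outcome (ts ! k) z = y \<and> rtype_treatment (ts ! k) z = d then (1::real) else 0)" for k x
  have pvec: "pvec \<gamma> (mixture_obs \<gamma> l ts) x = (\<Sum>k<length ts. ind k x) / length ts"
    if xc: "x \<in> coords n l" for x
  proof -
    obtain y d z where x: "x = (y, d, z)" and yz: "y < n" "z < l"
      using xc unfolding coords_def by blast
    show ?thesis
      using prob_mixture_obs_point[OF l ts inj bounded yz(2,1), where d=d]
        prob_mixture_obs_instrument[OF l ts yz(2), where \<gamma>=\<gamma>] l
      by (simp add: x pvec_def ind_def)
  qed
  have "fdot \<gamma> n l f (mixture_obs \<gamma> l ts) = (\<Sum>k<length ts. \<Sum>x\<in>coords n l. f x * ind k x) / length ts"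
    unfolding fdot_def using pvec
    by (simp add: sum_divide_distrib sum_distrib_left sum.swap[of _ "coords n l"])
  also have "\<dots> = (\<Sum>k<length ts. rtype_score f l (ts ! k)) / length ts"
  proof (intro arg_cong2[where f="(/)"] sum.cong refl)
    fix k assume "k \<in> {..<length ts}"
    then have "fst (ts ! k) < n" "fst (snd (ts ! k)) < n"
      using bounded by (auto simp: rtypes_bounded_def)
    then show "(\<Sum>x\<in>coords n l. f x * ind k x) = rtype_score f l (ts ! k)"
      unfolding ind_def rtype_score_def
      by (intro sum_coords_indicator) (auto simp: rtype_outcome_def rtype_treatment_def)
  qed
  finally show ?thesis by (simp add: sum_list_sum_nth atLeast0LessThan)
qed

definition same_responses :: "nat \<Rightarrow> rtype \<Rightarrow> rtype \<Rightarrow> rtype \<Rightarrow> rtype \<Rightarrow> bool" where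
  "same_responses l t1 t2 t3 t4 \<longleftrightarrow> (\<forall>z<l.
     {#(rtype_outcome t1 z, rtype_treatment t1 z), (rtype_outcome t2 z, rtype_treatment t2 z)#}
   = {#(rtype_outcome t3 z, rtype_treatment t3 z), (rtype_outcome t4 z, rtype_treatment t4 z)#})"

lemma rtype_score_same_responses:
  assumes "same_responses l t1 t2 t3 t4"
  shows "rtype_score f l t1 + rtype_score f l t2 = rtype_score f l t3 + rtype_score f l t4"
proof -
  have "f (rtype_outcome t1 z, rtype_treatment t1 z, z) + f (rtype_outcome t2 z, rtype_treatment t2 z, z)
      = f (rtype_outcome t3 z, rtype_treatment t3 z, z) + f (rtype_outcome t4 z, rtype_treatment t4 z, z)"
    if "z < l" for z
    using arg_cong[OF assms[unfolded same_responses_def, rule_format, OF that],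
        of "\<lambda>M. \<Sum>\<^sub># (image_mset (\<lambda>(y, d). f (y, d, z)) M)"]
    by simp
  then show ?thesis unfolding rtype_score_def sum.distrib[symmetric] by (intro sum.cong) auto
qed

lemma sum_list_map_update:
  fixes g :: "'a \<Rightarrow> real"
  shows "p < length xs \<Longrightarrow> (\<Sum>x\<leftarrow>xs[p := t]. g x) = (\<Sum>x\<leftarrow>xs. g x) - g (xs ! p) + g t"
proof (induction xs arbitrary: p)
  case (Cons x xs)
  then show ?case by (cases p) auto
qed simp

lemma mixture_exchange:
  assumes l: "l > 0" and inj: "inj_on \<gamma> {..<n}"
    and bounded: "rtypes_bounded n ts1" "rtypes_bounded n ts2" "rtypes_bounded n [t3, t4]"
    and len: "length ts1 = N" "length ts2 = N" and p: "p < N"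
    and same: "same_responses l (ts1 ! p) (ts2 ! p) t3 t4"
  defines "ts \<equiv> ts1[p := t3] @ ts2[p := t4]"
  shows "rtypes_bounded n ts" and "ts \<noteq> []"
    and "fdot \<gamma> n l g (mixture_obs \<gamma> l ts)
       = (fdot \<gamma> n l g (mixture_obs \<gamma> l ts1) + fdot \<gamma> n l g (mixture_obs \<gamma> l ts2)) / 2"
    and "mixture_ate \<gamma> ts = (mixture_ate \<gamma> ts1 + mixture_ate \<gamma> ts2) / 2
       + (rtype_effect \<gamma> t3 + rtype_effect \<gamma> t4 - rtype_effect \<gamma> (ts1 ! p) - rtype_effect \<gamma> (ts2 ! p)) / (2 * N)"
proof -
  have ne: "ts1 \<noteq> []" "ts2 \<noteq> []" using p len by auto
  show bd: "rtypes_bounded n ts"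
    using bounded unfolding ts_def rtypes_bounded_def by (auto dest!: set_update_subset_insert[THEN subsetD])
  show nonempty: "ts \<noteq> []" using ne by (simp add: ts_def)
  have length: "length ts = 2 * N" using len by (simp add: ts_def)
  have sum: "(\<Sum>t\<leftarrow>ts. h t) = (\<Sum>t\<leftarrow>ts1. h t) + (\<Sum>t\<leftarrow>ts2. h t) - h (ts1 ! p) - h (ts2 ! p) + h t3 + h t4"
    for h :: "rtype \<Rightarrow> real"
    using sum_list_map_update[of p ts1 h t3] sum_list_map_update[of p ts2 h t4] p len
    by (simp add: ts_def)
  have N: "real N > 0" using p by simp
  show "fdot \<gamma> n l g (mixture_obs \<gamma> l ts)
      = (fdot \<gamma> n l g (mixture_obs \<gamma> l ts1) + fdot \<gamma> n l g (mixture_obs \<gamma> l ts2)) / 2"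
    unfolding fdot_mixture_obs[OF l nonempty inj bd] fdot_mixture_obs[OF l ne(1) inj bounded(1)]
      fdot_mixture_obs[OF l ne(2) inj bounded(2)] length len sum
    using rtype_score_same_responses[OF same, of g] N by (simp add: field_simps)
  show "mixture_ate \<gamma> ts = (mixture_ate \<gamma> ts1 + mixture_ate \<gamma> ts2) / 2
      + (rtype_effect \<gamma> t3 + rtype_effect \<gamma> t4 - rtype_effect \<gamma> (ts1 ! p) - rtype_effect \<gamma> (ts2 ! p)) / (2 * N)"
    unfolding mixture_ate_def length len sum using N by (simp add: field_simps)
qed

section \<open>Counting maximisers\<close>

lemma card_le_of_max_representation:
  fixes S :: "'p \<Rightarrow> real set" and \<phi> :: "'g \<Rightarrow> 'p \<Rightarrow> real"
  assumes "finite G" and "G \<noteq> {}"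
    and max: "\<And>P. C P \<Longrightarrow> Inf (S P) = Max ((\<lambda>g. \<phi> g P) ` G)"
    and nonempty: "\<And>P. C P \<Longrightarrow> S P \<noteq> {}"
    and point: "\<And>i. i \<in> I \<Longrightarrow> C (Q i) \<and> (\<forall>x\<in>S (Q i). v i \<le> x)"
    and midpoint: "\<And>i j. i \<in> I \<Longrightarrow> j \<in> I \<Longrightarrow> i \<noteq> j \<Longrightarrow> \<exists>R. C R \<and> bdd_below (S R)
        \<and> (\<forall>g\<in>G. \<phi> g R = (\<phi> g (Q i) + \<phi> g (Q j)) / 2) \<and> (\<exists>x\<in>S R. x < (v i + v j) / 2)"
  shows "card I \<le> card G"
proof -
  have "\<forall>i. \<exists>g. g \<in> G \<and> \<phi> g (Q i) = Max ((\<lambda>g. \<phi> g (Q i)) ` G)"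
  proof
    fix i
    have "Max ((\<lambda>g. \<phi> g (Q i)) ` G) \<in> (\<lambda>g. \<phi> g (Q i)) ` G"
      using assms(1,2) by (intro Max_in) auto
    then show "\<exists>g. g \<in> G \<and> \<phi> g (Q i) = Max ((\<lambda>g. \<phi> g (Q i)) ` G)" by auto
  qed
  then obtain sel where "\<forall>i. sel i \<in> G \<and> \<phi> (sel i) (Q i) = Max ((\<lambda>g. \<phi> g (Q i)) ` G)"
    by (rule choice[THEN exE])
  then have sel: "\<And>i. sel i \<in> G" "\<And>i. \<phi> (sel i) (Q i) = Max ((\<lambda>g. \<phi> g (Q i)) ` G)"
    by auto
  have lower: "v i \<le> \<phi> (sel i) (Q i)" if "i \<in> I" for i
  proof -
    have "v i \<le> Inf (S (Q i))" using point[OF that] nonempty by (intro cInf_greatest) auto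
    also have "\<dots> = \<phi> (sel i) (Q i)" using max point[OF that] sel(2) by simp
    finally show ?thesis .
  qed
  have "inj_on sel I"
  proof (rule inj_onI, rule ccontr)
    fix i j assume i: "i \<in> I" and j: "j \<in> I" and same: "sel i = sel j" and "i \<noteq> j"
    then obtain R x where R: "C R" "bdd_below (S R)" "\<forall>g\<in>G. \<phi> g R = (\<phi> g (Q i) + \<phi> g (Q j)) / 2"
      and x: "x \<in> S R" "x < (v i + v j) / 2"
      using midpoint[OF i j \<open>i \<noteq> j\<close>] by blast
    have "(v i + v j) / 2 \<le> \<phi> (sel i) R"
      using R(3) sel(1) lower[OF i] lower[OF j] same by simp
    also have "\<dots> \<le> Max ((\<lambda>g. \<phi> g R) ` G)" using assms(1) sel(1) by simp
    also have "\<dots> = Inf (S R)" using max[OF R(1)] by simp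
    also have "\<dots> \<le> x" using x(1) R(2) by (rule cInf_lower)
    finally show False using x(2) by simp
  qed
  then show ?thesis using assms(1) sel(1) by (intro card_inj_on_le) auto
qed

section \<open>Mixtures at which the lower bound is attained\<close>

definition tight_labels :: "nat \<Rightarrow> nat \<Rightarrow> (nat \<times> (nat \<Rightarrow> nat)) set" where
  "tight_labels n l = Sigma {..<l} (\<lambda>z0. PiE {1..<n} (\<lambda>_. {..<l} - {z0}))"

lemma card_tight_labels: "card (tight_labels n l) = l * (l - 1) ^ (n - 1)"
proof -
  have "card (tight_labels n l) = (\<Sum>z0<l. card (PiE {1..<n} (\<lambda>_. {..<l} - {z0})))"
    unfolding tight_labels_def by (intro card_SigmaI) (auto intro: finite_PiE)
  also have "\<dots> = (\<Sum>z0<l. (l - 1) ^ (n - 1))"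
    by (intro sum.cong refl) (simp add: card_PiE)
  finally show ?thesis by simp
qed

definition tight_rtypes :: "nat \<Rightarrow> nat \<Rightarrow> (nat \<Rightarrow> nat) \<Rightarrow> rtype list" where
  "tight_rtypes n z0 c = (0, 0, - {z0}) # map (\<lambda>y. (0, y, {c y})) [1..<n]"

definition tight_coeff :: "(nat \<Rightarrow> real) \<Rightarrow> nat \<Rightarrow> nat \<Rightarrow> (nat \<Rightarrow> nat) \<Rightarrow> nat \<times> nat \<times> nat \<Rightarrow> real" where
  "tight_coeff \<gamma> n z0 c = (\<lambda>(y, d, z).
     if z = z0 then (if d = 1 then \<gamma> 0 - \<gamma> (n - 1) else \<gamma> 0 - \<gamma> y)
     else if d = 1 \<and> 1 \<le> y \<and> c y = z then \<gamma> y - \<gamma> 0 else 0)"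

lemma tight_rtypes_nth:
  "tight_rtypes n z0 c ! 0 = (0, 0, - {z0})"
  "1 \<le> y \<Longrightarrow> y < n \<Longrightarrow> tight_rtypes n z0 c ! y = (0, y, {c y})"
  by (auto simp: tight_rtypes_def nth_Cons split: nat.split)

lemma tight_rtypes_length: "n \<ge> 1 \<Longrightarrow> length (tight_rtypes n z0 c) = n"
  by (simp add: tight_rtypes_def)

lemma tight_rtypes_bounded: "n \<ge> 1 \<Longrightarrow> rtypes_bounded n (tight_rtypes n z0 c)"
  by (auto simp: tight_rtypes_def rtypes_bounded_def)

lemma dual_feasible_tight_coeff:
  assumes mono: "strict_mono_on {..<n} \<gamma>" and z0: "z0 < l" and c: "c \<in> {1..<n} \<rightarrow> {..<l} - {z0}"
  shows "dual_feasible \<gamma> n l (tight_coeff \<gamma> n z0 c)"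
  unfolding dual_feasible_def
proof (intro allI impI)
  fix a b assume a: "a < n" and b: "b < n"
  have top: "\<gamma> a \<le> \<gamma> (n - 1)" and bottom: "\<gamma> 0 \<le> \<gamma> b"
    using a b by (auto intro: strict_mono_on_leD[OF mono])
  let ?f = "tight_coeff \<gamma> n z0 c"
  have "(\<Sum>z<l. max (?f (b, 1, z)) (?f (a, 0, z)))
      = max (?f (b, 1, z0)) (?f (a, 0, z0)) + (\<Sum>z\<in>{..<l} - {z0}. max (?f (b, 1, z)) (?f (a, 0, z)))"
    using z0 by (simp add: sum.remove)
  also have "max (?f (b, 1, z0)) (?f (a, 0, z0)) = \<gamma> 0 - \<gamma> a"
    using top by (simp add: tight_coeff_def)
  also have "(\<Sum>z\<in>{..<l} - {z0}. max (?f (b, 1, z)) (?f (a, 0, z)))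
      = (\<Sum>z\<in>{..<l} - {z0}. if 1 \<le> b \<and> c b = z then \<gamma> b - \<gamma> 0 else 0)"
    using bottom by (intro sum.cong refl) (auto simp: tight_coeff_def)
  also have "\<dots> = (if 1 \<le> b then \<gamma> b - \<gamma> 0 else 0)"
    using c b by (cases "1 \<le> b") (auto simp: sum.delta)
  finally show "(\<Sum>z<l. max (?f (b, 1, z)) (?f (a, 0, z))) \<le> \<gamma> b - \<gamma> a"
    using bottom by auto
qed

lemma rtype_score_tight_coeff:
  assumes z0: "z0 < l" and c: "c \<in> {1..<n} \<rightarrow> {..<l} - {z0}" and t: "t \<in> set (tight_rtypes n z0 c)"
  shows "rtype_score (tight_coeff \<gamma> n z0 c) l t = rtype_effect \<gamma> t"
proof -
  consider "t = (0, 0, - {z0})" | y where "1 \<le> y" "y < n" "t = (0, y, {c y})"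
    using t unfolding tight_rtypes_def by auto
  then show ?thesis
  proof cases
    case 1
    have "tight_coeff \<gamma> n z0 c (rtype_outcome t z, rtype_treatment t z, z) = 0" for z
      by (simp add: 1 tight_coeff_def rtype_outcome_def rtype_treatment_def)
    then show ?thesis by (simp add: 1 rtype_score_def rtype_effect_def)
  next
    case 2
    then have "c y < l" "c y \<noteq> z0" using c by auto
    then have "rtype_score (tight_coeff \<gamma> n z0 c) l t = (\<Sum>z<l. if c y = z then \<gamma> y - \<gamma> 0 else 0)"
      unfolding rtype_score_def 2(3) using 2
      by (intro sum.cong refl) (auto simp: tight_coeff_def rtype_outcome_def rtype_treatment_def)
    then show ?thesis using \<open>c y < l\<close> by (simp add: 2(3) rtype_effect_def)
  qed
qed

lemma tight_mixture_ate_le: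
  assumes mono: "strict_mono_on {..<n} \<gamma>" and n: "n \<ge> 1" and l: "l > 0"
    and label: "(z0, c) \<in> tight_labels n l"
    and x: "x \<in> ate_set m \<gamma> n l (mixture_obs \<gamma> l (tight_rtypes n z0 c))"
  shows "mixture_ate \<gamma> (tight_rtypes n z0 c) \<le> x"
proof -
  let ?ts = "tight_rtypes n z0 c"
  have inj: "inj_on \<gamma> {..<n}" using mono by (rule strict_mono_on_imp_inj_on)
  have z0: "z0 < l" and c: "c \<in> {1..<n} \<rightarrow> {..<l} - {z0}"
    using label by (auto simp: tight_labels_def)
  have ts: "?ts \<noteq> []" "rtypes_bounded n ?ts"
    using tight_rtypes_bounded[OF n] by (auto simp: tight_rtypes_def)
  have "mixture_ate \<gamma> ?ts = fdot \<gamma> n l (tight_coeff \<gamma> n z0 c) (mixture_obs \<gamma> l ?ts)"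
    unfolding fdot_mixture_obs[OF l ts(1) inj ts(2)] mixture_ate_def
    using rtype_score_tight_coeff[OF z0 c] by (simp cong: map_cong)
  also have "\<dots> \<le> x"
    using x inj compatible_mixture_obs[OF l ts(1,2), where m=m and \<gamma>=\<gamma>] dual_feasible_tight_coeff[OF mono z0 c]
    unfolding compatible_def by (intro fdot_le_ate) auto
  finally show ?thesis .
qed

lemma tight_rtypes_exchange:
  assumes mono: "strict_mono_on {..<n} \<gamma>" and n: "n \<ge> 2"
    and i: "i \<in> tight_labels n l" and j: "j \<in> tight_labels n l" and "i \<noteq> j"
  obtains p t3 t4 where "p < n" and "rtypes_bounded n [t3, t4]"
    and "same_responses l (tight_rtypes n (fst i) (snd i) ! p) (tight_rtypes n (fst j) (snd j) ! p) t3 t4"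
    and "rtype_effect \<gamma> t3 + rtype_effect \<gamma> t4
       < rtype_effect \<gamma> (tight_rtypes n (fst i) (snd i) ! p) + rtype_effect \<gamma> (tight_rtypes n (fst j) (snd j) ! p)"
proof (cases "fst i = fst j")
  case False
  have "\<gamma> 0 < \<gamma> (n - 1)" using n by (intro strict_mono_onD[OF mono]) auto
  then show ?thesis
    using False n
    by (intro that[of 0 "(n - 1, 0, UNIV)" "(0, 0, - {fst i, fst j})"])
      (auto simp: tight_rtypes_nth rtypes_bounded_def same_responses_def rtype_effect_def
        rtype_outcome_def rtype_treatment_def add_mset_commute)
next
  case True
  obtain y where y: "y \<in> {1..<n}" "snd i y \<noteq> snd j y"
  proof -
    have "snd i \<in> PiE {1..<n} (\<lambda>_. {..<l} - {fst i})" "snd j \<in> PiE {1..<n} (\<lambda>_. {..<l} - {fst i})"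
      using i j True by (auto simp: tight_labels_def)
    then show ?thesis using that \<open>i \<noteq> j\<close> True by (metis PiE_ext prod_eq_iff)
  qed
  have "\<gamma> 0 < \<gamma> y" using y by (intro strict_mono_onD[OF mono]) auto
  then show ?thesis
    using y
    by (intro that[of y "(0, 0, {})" "(0, y, {snd i y, snd j y})"])
      (auto simp: tight_rtypes_nth rtypes_bounded_def same_responses_def rtype_effect_def
        rtype_outcome_def rtype_treatment_def add_mset_commute)
qed

lemma tight_mixtures_midpoint:
  assumes mono: "strict_mono_on {..<n} \<gamma>" and n: "n \<ge> 2" and l: "l > 0"
    and i: "i \<in> tight_labels n l" and j: "j \<in> tight_labels n l" and "i \<noteq> j"
  shows "\<exists>R. compatible m \<gamma> n l R \<and> bdd_below (ate_set m \<gamma> n l R)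
    \<and> (\<forall>g. fdot \<gamma> n l g R = (fdot \<gamma> n l g (mixture_obs \<gamma> l (tight_rtypes n (fst i) (snd i)))
                             + fdot \<gamma> n l g (mixture_obs \<gamma> l (tight_rtypes n (fst j) (snd j)))) / 2)
    \<and> (\<exists>x\<in>ate_set m \<gamma> n l R. x < (mixture_ate \<gamma> (tight_rtypes n (fst i) (snd i))
                                   + mixture_ate \<gamma> (tight_rtypes n (fst j) (snd j))) / 2)"
proof -
  define ts where "ts i = tight_rtypes n (fst i) (snd i)" for i :: "nat \<times> (nat \<Rightarrow> nat)"
  have inj: "inj_on \<gamma> {..<n}" using mono by (rule strict_mono_on_imp_inj_on)
  have ts: "rtypes_bounded n (ts i)" "length (ts i) = n" for i
    using n tight_rtypes_bounded[of n] tight_rtypes_length[of n] by (auto simp: ts_def)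
  obtain p t3 t4 where p: "p < n" and bounded: "rtypes_bounded n [t3, t4]"
    and same: "same_responses l (ts i ! p) (ts j ! p) t3 t4"
    and smaller: "rtype_effect \<gamma> t3 + rtype_effect \<gamma> t4 < rtype_effect \<gamma> (ts i ! p) + rtype_effect \<gamma> (ts j ! p)"
    using tight_rtypes_exchange[OF mono n i j \<open>i \<noteq> j\<close>] unfolding ts_def by metis
  define R where "R = mixture_obs \<gamma> l ((ts i)[p := t3] @ (ts j)[p := t4])"
  note exchange = mixture_exchange[OF l inj ts(1) ts(1) bounded ts(2) ts(2) p same, folded R_def]
  have compatible: "compatible m \<gamma> n l R"
    unfolding R_def using compatible_mixture_obs[OF l exchange(2,1)] .
  have label: "fst i < l" "snd i \<in> {1..<n} \<rightarrow> {..<l} - {fst i}"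
    using i by (auto simp: tight_labels_def)
  have "fdot \<gamma> n l (tight_coeff \<gamma> n (fst i) (snd i)) R \<le> x" if "x \<in> ate_set m \<gamma> n l R" for x
    using that inj compatible dual_feasible_tight_coeff[OF mono label]
    unfolding compatible_def by (intro fdot_le_ate) auto
  then have "bdd_below (ate_set m \<gamma> n l R)" by (rule bdd_belowI)
  moreover have "mixture_ate \<gamma> ((ts i)[p := t3] @ (ts j)[p := t4]) \<in> ate_set m \<gamma> n l R"
    unfolding R_def using mixture_ate_in_ate_set[OF l exchange(2,1)] .
  moreover have "(rtype_effect \<gamma> t3 + rtype_effect \<gamma> t4 - rtype_effect \<gamma> (ts i ! p) - rtype_effect \<gamma> (ts j ! p))
      / (2 * n) < 0"
    using smaller p by (intro divide_neg_pos) auto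
  then have "mixture_ate \<gamma> ((ts i)[p := t3] @ (ts j)[p := t4]) < (mixture_ate \<gamma> (ts i) + mixture_ate \<gamma> (ts j)) / 2"
    unfolding exchange(4) by linarith
  ultimately show ?thesis
    using compatible exchange(3) unfolding ts_def by blast
qed

lemma card_tight_labels_le:
  assumes mono: "strict_mono_on {..<n} \<gamma>" and n: "n \<ge> 2" and l: "l > 0"
    and F: "finite F" "F \<noteq> {}"
    and lower: "\<forall>P. compatible m \<gamma> n l P \<longrightarrow> lower_bound m \<gamma> n l P = Max ((\<lambda>f. fdot \<gamma> n l f P) ` F)"
  shows "card (tight_labels n l) \<le> card F"
proof (rule card_le_of_max_representation[OF F, where C="compatible m \<gamma> n l" and S="ate_set m \<gamma> n l"
      and \<phi>="fdot \<gamma> n l"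
      and Q="\<lambda>i. mixture_obs \<gamma> l (tight_rtypes n (fst i) (snd i))"
      and v="\<lambda>i. mixture_ate \<gamma> (tight_rtypes n (fst i) (snd i))"], goal_cases max nonempty point midpoint)
  case (max P)
  then show ?case using lower unfolding lower_bound_def by blast
next
  case (nonempty P)
  then show ?case unfolding compatible_def by blast
next
  case (point i)
  then show ?case
    using compatible_mixture_obs[OF l _ tight_rtypes_bounded] tight_mixture_ate_le[OF mono _ l, of "fst i" "snd i"] n
    by (auto simp: tight_rtypes_def)
next
  case (midpoint i j)
  from tight_mixtures_midpoint[OF mono n l midpoint, where m=m] show ?case by blast
qed

lemma lower_bound_max_representation:
  assumes F: "finite F" "F \<noteq> {}"
    and "(\<forall>P. compatible m \<gamma> n l P \<longrightarrow> lower_bound m \<gamma> n l P = Max ((\<lambda>f. fdot \<gamma> n l f P) ` F))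
       \<or> (\<forall>P. compatible m \<gamma> n l P \<longrightarrow> upper_bound m \<gamma> n l P = Min ((\<lambda>f. fdot \<gamma> n l f P) ` F))"
  obtains F' where "finite F'" and "F' \<noteq> {}" and "card F' \<le> card F"
    and "\<forall>P. compatible m \<gamma> n l P \<longrightarrow> lower_bound m \<gamma> n l P = Max ((\<lambda>f. fdot \<gamma> n l f P) ` F')"
  using assms(3)
proof
  assume "\<forall>P. compatible m \<gamma> n l P \<longrightarrow> upper_bound m \<gamma> n l P = Min ((\<lambda>f. fdot \<gamma> n l f P) ` F)"
  from lower_bound_max_of_upper_bound_min[OF F this] show thesis
    using F card_image_le by (intro that[of "(\<lambda>f. - (f \<circ> flip_coord)) ` F"]) auto
qed (use F in blast)

lemma bound_le_card_tight_labels: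
  "int l * ((int l - 1) ^ (n - 1) - (int l - 1)) \<le> int (card (tight_labels n l))"
proof (cases "l = 0")
  case False
  then have "int (card (tight_labels n l)) = int l * (int l - 1) ^ (n - 1)"
    by (simp add: card_tight_labels of_nat_diff)
  moreover have "0 \<le> int l * (int l - 1)" using False by simp
  ultimately show ?thesis unfolding right_diff_distrib by linarith
qed simp

lemma bound_le_one:
  assumes "n \<le> 1 \<or> l = 0"
  shows "int l * ((int l - 1) ^ (n - 1) - (int l - 1)) \<le> 1"
proof (cases "l = 0")
  case False
  with assms have "int l * ((int l - 1) ^ (n - 1) - (int l - 1)) = 1 - (int l - 1)\<^sup>2"
    by (simp add: power2_eq_square algebra_simps)
  then show ?thesis by simp
qed simp

theorem corollary2:
  fixes m :: iv_model and \<gamma> :: "nat \<Rightarrow> real" and n l :: nat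
    and F :: "(nat \<times> nat \<times> nat \<Rightarrow> real) set"
  assumes "strict_mono_on {..<n} \<gamma>"
    and "finite F" and "F \<noteq> {}" and "F \<subseteq> coord_space n l"
    and "(\<forall>P. compatible m \<gamma> n l P \<longrightarrow>
             lower_bound m \<gamma> n l P = Max ((\<lambda>f. fdot \<gamma> n l f P) ` F))
       \<or> (\<forall>P. compatible m \<gamma> n l P \<longrightarrow>
             upper_bound m \<gamma> n l P = Min ((\<lambda>f. fdot \<gamma> n l f P) ` F))"
  shows "int (card F) \<ge> int l * ((int l - 1) ^ (n - 1) - (int l - 1))"
proof (cases "n \<ge> 2 \<and> l > 0")
  case True
  obtain F' where "finite F'" "F' \<noteq> {}" "card F' \<le> card F"
    and "\<forall>P. compatible m \<gamma> n l P \<longrightarrow> lower_bound m \<gamma> n l P = Max ((\<lambda>f. fdot \<gamma> n l f P) ` F')"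
    using lower_bound_max_representation[OF assms(2,3,5)] by blast
  with True have "card (tight_labels n l) \<le> card F"
    using card_tight_labels_le[OF assms(1)] by (meson le_trans)
  then show ?thesis using bound_le_card_tight_labels[of l n] by linarith
next
  case False
  then have "int l * ((int l - 1) ^ (n - 1) - (int l - 1)) \<le> 1" by (intro bound_le_one) auto
  moreover have "1 \<le> card F" using assms(2,3) by (simp add: Suc_le_eq card_gt_0_iff)
  ultimately show ?thesis by linarith
qed

end
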